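(* For every $\lambda$-term $A$ there is a clean $\lambda$-term $B$ such that $A\twoheadrightarrow_{\alpha'}B$.
   Context: $\lambda$-terms over an infinite variable set $\mathcal V$: $\mathcal M ::= \mathcal V \mid (\lambda\mathcal V.\mathcal M)\mid(\mathcal M\mathcal M)$. $FV(C)$ is the set of variables with a free occurrence in $C$ (occurrences inside the body of $\lambda v.\cdot$, or the $v$ of $\lambda v$, are bound); $BV(C)$ is the set of $v$ such that $\lambda v$ occurs in $C$; $FV(vA)=\{v\}\cup FV(A)$. A term $A$ is clean iff $BV(A)\cap FV(A)=\emptyset$ and for every variable $v$, $\lambda v$ occurs at most once in $A$. Grafting $A\{v:=B\}$: $v\{v:=B\}=B$; $v'\{v:=B\}=v'$ if $v'\neq v$; $(AC)\{v:=B\}=A\{v:=B\}C\{v:=B\}$; $(\lambda v.A)\{v:=B\}=\lambda v.A$; $(\lambda v'.A)\{v:=B\}=\lambda v'.A\{v:=B\}$ if $v\neq v'$. $\to_{\alpha'}$ is the least relation closed under $A\mapsto AC$, $A\mapsto CA$, $A\mapsto\lambda u.A$ (compatible) containing $\lambda v.A\to_{\alpha'}\lambda v'.A\{v:=v'\}$ whenever $v'\notin FV(vA)$ and $v,v'\notin BV(A)$; $\twoheadrightarrow_{\alpha'}$ is its reflexive transitive closure. *)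

theory Defs
  imports Main
begin

datatype 'v lterm = Var 'v | Lam 'v "'v lterm" | App "'v lterm" "'v lterm"

fun FV :: "'v lterm \<Rightarrow> 'v set" where
  "FV (Var x) = {x}"
| "FV (Lam x A) = FV A - {x}"
| "FV (App A B) = FV A \<union> FV B"

fun BV :: "'v lterm \<Rightarrow> 'v set" where
  "BV (Var x) = {}"
| "BV (Lam x A) = insert x (BV A)"
| "BV (App A B) = BV A \<union> BV B"

fun lam_count :: "'v \<Rightarrow> 'v lterm \<Rightarrow> nat" where
  "lam_count v (Var x) = 0"
| "lam_count v (Lam x A) = (if x = v then 1 else 0) + lam_count v A"
| "lam_count v (App A B) = lam_count v A + lam_count v B"

definition clean :: "'v lterm \<Rightarrow> bool" where
  "clean A \<longleftrightarrow> BV A \<inter> FV A = {} \<and> (\<forall>v. lam_count v A \<le> 1)"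

fun graft :: "'v lterm \<Rightarrow> 'v \<Rightarrow> 'v lterm \<Rightarrow> 'v lterm" where
  "graft (Var x) v B = (if x = v then B else Var x)"
| "graft (App A C) v B = App (graft A v B) (graft C v B)"
| "graft (Lam x A) v B = (if x = v then Lam x A else Lam x (graft A v B))"

inductive alpha1 :: "'v lterm \<Rightarrow> 'v lterm \<Rightarrow> bool" where
  rename: "\<lbrakk> v' \<notin> insert v (FV A); v \<notin> BV A; v' \<notin> BV A \<rbrakk>
           \<Longrightarrow> alpha1 (Lam v A) (Lam v' (graft A v (Var v')))"
| appL: "alpha1 A A' \<Longrightarrow> alpha1 (App A C) (App A' C)"
| appR: "alpha1 A A' \<Longrightarrow> alpha1 (App C A) (App C A')"
| lam: "alpha1 A A' \<Longrightarrow> alpha1 (Lam u A) (Lam u A')"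

definition alpha_star :: "'v lterm \<Rightarrow> 'v lterm \<Rightarrow> bool" where
  "alpha_star = alpha1\<^sup>*\<^sup>*"

end

theory Submission
  imports Defs
begin

text \<open>Induction on the term, strengthened so that the bound variables of the clean term avoid a
given finite set \<open>S\<close>. At an abstraction \<open>\<lambda>v.A\<close>, the clean variant \<open>B\<close> of \<open>A\<close> (with \<open>v\<close> and \<open>S\<close> avoided)
lets us rename \<open>v\<close> to a variable that is fresh for everything in sight, which infinitely many
variables make possible. At an application \<open>A\<^sub>1 A\<^sub>2\<close>, the binders of the variant of \<open>A\<^sub>1\<close> avoid
\<open>FV A\<^sub>2\<close>, and those of the variant of \<open>A\<^sub>2\<close> avoid \<open>FV A\<^sub>1\<close> and the binders just chosen.
Free variables are invariant under \<open>\<rightarrow>\<^sub>\<alpha>'\<close>, so the two halves do not capture each other.\<close>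

lemma finite_FV: "finite (FV A)"
  by (induction A) auto

lemma finite_BV: "finite (BV A)"
  by (induction A) auto

lemma BV_graft_Var: "BV (graft A v (Var w)) = BV A"
  by (induction A) auto

lemma FV_graft_Var:
  "v \<notin> BV A \<Longrightarrow> w \<notin> BV A \<Longrightarrow>
   FV (graft A v (Var w)) = FV A - {v} \<union> (if v \<in> FV A then {w} else {})"
  by (induction A) auto

lemma lam_count_graft_Var: "lam_count u (graft A v (Var w)) = lam_count u A"
  by (induction A) auto

lemma lam_count_eq_0_iff: "lam_count u A = 0 \<longleftrightarrow> u \<notin> BV A"
  by (induction A) auto

lemma FV_alpha1: "alpha1 A B \<Longrightarrow> FV B = FV A"
  by (induction rule: alpha1.induct) (auto simp: FV_graft_Var)

lemma FV_alpha_star: "alpha_star A B \<Longrightarrow> FV B = FV A"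
  unfolding alpha_star_def by (induction rule: rtranclp_induct) (auto dest: FV_alpha1)

lemma alpha_star_Lam: "alpha_star A A' \<Longrightarrow> alpha_star (Lam u A) (Lam u A')"
  unfolding alpha_star_def
  by (induction rule: rtranclp_induct) (auto intro: rtranclp.rtrancl_into_rtrancl alpha1.lam)

lemma alpha_star_App:
  assumes "alpha_star A A'" and "alpha_star C C'"
  shows "alpha_star (App A C) (App A' C')"
proof -
  have "alpha1\<^sup>*\<^sup>* (App A C) (App A' C)"
    using assms(1) unfolding alpha_star_def
    by (induction rule: rtranclp_induct) (auto intro: rtranclp.rtrancl_into_rtrancl alpha1.appL)
  moreover have "alpha1\<^sup>*\<^sup>* (App A' C) (App A' C')"
    using assms(2) unfolding alpha_star_def
    by (induction rule: rtranclp_induct) (auto intro: rtranclp.rtrancl_into_rtrancl alpha1.appR)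
  ultimately show ?thesis
    unfolding alpha_star_def by (rule rtranclp_trans)
qed

lemma clean_Var: "clean (Var x)"
  by (simp add: clean_def)

lemma clean_App:
  assumes "clean A" and "clean C"
    and "BV A \<inter> BV C = {}" and "BV A \<inter> FV C = {}" and "BV C \<inter> FV A = {}"
  shows "clean (App A C)"
proof -
  have "lam_count u A + lam_count u C \<le> 1" for u
  proof (cases "u \<in> BV A")
    case True
    then have "lam_count u C = 0"
      using assms(3) by (auto simp: lam_count_eq_0_iff)
    then show ?thesis using assms(1) by (simp add: clean_def)
  next
    case False
    then have "lam_count u A = 0"
      by (simp add: lam_count_eq_0_iff)
    then show ?thesis using assms(2) by (simp add: clean_def)
  qed
  then show ?thesis
    using assms unfolding clean_def by auto
qed

lemma clean_Lam_graft_Var: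
  assumes "clean A" and "v \<notin> BV A" and "w \<notin> BV A"
  shows "clean (Lam w (graft A v (Var w)))"
proof -
  have "FV (graft A v (Var w)) \<subseteq> insert w (FV A)"
    using FV_graft_Var[OF assms(2,3)] by auto
  moreover have "lam_count w A = 0"
    using assms(3) by (simp add: lam_count_eq_0_iff)
  ultimately show ?thesis
    using assms(1) unfolding clean_def by (auto simp: BV_graft_Var lam_count_graft_Var)
qed

lemma clean_alpha_variant_avoiding:
  fixes A :: "'v lterm"
  assumes "infinite (UNIV :: 'v set)" and "finite S"
  shows "\<exists>B. clean B \<and> alpha_star A B \<and> BV B \<inter> S = {}"
  using assms(2)
proof (induction A arbitrary: S)
  case (Var x)
  show ?case
    by (intro exI[of _ "Var x"]) (simp add: clean_Var alpha_star_def)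
next
  case (Lam v A)
  obtain B where B: "clean B" "alpha_star A B" "BV B \<inter> insert v S = {}"
    using Lam.IH[of "insert v S"] Lam.prems by auto
  have "finite (insert v S \<union> FV B \<union> BV B)"
    using Lam.prems finite_FV finite_BV by auto
  from ex_new_if_finite[OF assms(1) this]
  obtain w where w: "w \<notin> insert v S \<union> FV B \<union> BV B" ..
  have "alpha1 (Lam v B) (Lam w (graft B v (Var w)))"
    by (rule alpha1.rename) (use w B(3) in auto)
  with alpha_star_Lam[OF B(2)] have "alpha_star (Lam v A) (Lam w (graft B v (Var w)))"
    unfolding alpha_star_def by (rule rtranclp.rtrancl_into_rtrancl)
  moreover have "clean (Lam w (graft B v (Var w)))"
    using B(1,3) w by (intro clean_Lam_graft_Var) auto
  moreover have "BV (Lam w (graft B v (Var w))) \<inter> S = {}"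
    using B(3) w by (auto simp: BV_graft_Var)
  ultimately show ?case by blast
next
  case (App A\<^sub>1 A\<^sub>2)
  obtain B\<^sub>1 where B\<^sub>1: "clean B\<^sub>1" "alpha_star A\<^sub>1 B\<^sub>1" "BV B\<^sub>1 \<inter> (S \<union> FV A\<^sub>2) = {}"
    using App.IH(1)[of "S \<union> FV A\<^sub>2"] App.prems finite_FV by auto
  obtain B\<^sub>2 where B\<^sub>2: "clean B\<^sub>2" "alpha_star A\<^sub>2 B\<^sub>2" "BV B\<^sub>2 \<inter> (S \<union> FV A\<^sub>1 \<union> BV B\<^sub>1) = {}"
    using App.IH(2)[of "S \<union> FV A\<^sub>1 \<union> BV B\<^sub>1"] App.prems finite_FV finite_BV by auto
  have "clean (App B\<^sub>1 B\<^sub>2)"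
  proof (rule clean_App)
    show "BV B\<^sub>1 \<inter> FV B\<^sub>2 = {}" and "BV B\<^sub>2 \<inter> FV B\<^sub>1 = {}"
      using B\<^sub>1(3) B\<^sub>2(3) FV_alpha_star[OF B\<^sub>1(2)] FV_alpha_star[OF B\<^sub>2(2)] by auto
  qed (use B\<^sub>1(1,3) B\<^sub>2(1,3) in auto)
  moreover have "alpha_star (App A\<^sub>1 A\<^sub>2) (App B\<^sub>1 B\<^sub>2)"
    using B\<^sub>1(2) B\<^sub>2(2) by (rule alpha_star_App)
  moreover have "BV (App B\<^sub>1 B\<^sub>2) \<inter> S = {}"
    using B\<^sub>1(3) B\<^sub>2(3) by auto
  ultimately show ?case by blast
qed

theorem lemma5p5:
  fixes A :: "'v lterm"
  assumes "infinite (UNIV :: 'v set)"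
  shows "\<exists>B. clean B \<and> alpha_star A B"
  using clean_alpha_variant_avoiding[OF assms, of "{}" A] by auto

end
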